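(* Let $S=\mathbb{R}/{\sim_F^*}$ and let $f:\mathbb{R}\to S$ be $f(x)=[x]_{\sim_F^*}$. Then for every $T_3$-anonymous predictor $P:{}^{\mathbb{R}}S\to{}^{\mathbb{R}}S$, the function $P(f)$ is constant, i.e. $P(f)(w)=P(f)(z)$ for all $w,z\in\mathbb{R}$.
   Context: Let $h(x)=0$ for $x\le 0$ and $h(x)=e^{-1/x}$ for $x>0$, and $s(x)=\frac{h(x)}{h(x)+h(1-x)}$ on $[0,1]$. For $A=(p_1,q_1)$, $B=(p_2,q_2)$ with $p_1<p_2$, $q_1<q_2$, let $s_{AB}:[p_1,p_2]\to[q_1,q_2]$, $s_{AB}(x)=(q_2-q_1)\,s\!\left(\frac{x-p_1}{p_2-p_1}\right)+q_1$. Let $F$ be the set of all such $s_{AB}$ with $A,B$ having rational coordinates. Write $x\sim_F y$ if some $g\in F$ has $g(x)=y$ or $g^{-1}(x)=y$, and let $\sim_F^*$ be the reflexive-transitive closure of $\sim_F$ (an equivalence relation on $\mathbb{R}$). ${}^{\mathbb{R}}S$ denotes all functions $\mathbb{R}\to S$. A predictor is $P:{}^{\mathbb{R}}S\to{}^{\mathbb{R}}S$ with $P(f)(x)=P(g)(x)$ whenever $f\upharpoonright(-\infty,x)=g\upharpoonright(-\infty,x)$. $P$ is $T_3$-anonymous if $P(f\circ t)=P(f)\circ t$ for every $f$ and every $t\in T_3$, where $T_3$ is the set of infinitely differentiable strictly increasing bijections $\mathbb{R}\to\mathbb{R}$. *)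

theory Defs
  imports "HOL-Analysis.Analysis"
begin

definition hfun :: "real \<Rightarrow> real" where
  "hfun x = (if x \<le> 0 then 0 else exp (- 1 / x))"

definition sfun :: "real \<Rightarrow> real" where
  "sfun x = hfun x / (hfun x + hfun (1 - x))"

text \<open>s_AB for A = (p1,q1), B = (p2,q2); its domain is [p1,p2].\<close>
definition sAB :: "real \<Rightarrow> real \<Rightarrow> real \<Rightarrow> real \<Rightarrow> real \<Rightarrow> real" where
  "sAB p1 q1 p2 q2 x = (q2 - q1) * sfun ((x - p1) / (p2 - p1)) + q1"

definition simF :: "real \<Rightarrow> real \<Rightarrow> bool" where
  "simF x y \<longleftrightarrow> (\<exists>p1 q1 p2 q2. p1 \<in> \<rat> \<and> q1 \<in> \<rat> \<and> p2 \<in> \<rat> \<and> q2 \<in> \<rat> \<and>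
      p1 < p2 \<and> q1 < q2 \<and>
      ((x \<in> {p1..p2} \<and> sAB p1 q1 p2 q2 x = y) \<or>
       (y \<in> {p1..p2} \<and> sAB p1 q1 p2 q2 y = x)))"

definition simF_star :: "real \<Rightarrow> real \<Rightarrow> bool" where
  "simF_star x y \<longleftrightarrow> (x, y) \<in> {(a, b). simF a b}\<^sup>*"

lemma simF_sym: "simF x y \<Longrightarrow> simF y x"
  unfolding simF_def by blast

lemma equivp_simF_star: "equivp simF_star"
proof (rule equivpI)
  show "reflp simF_star" by (simp add: reflp_def simF_star_def)
  show "transp simF_star"
    by (auto simp: transp_def simF_star_def)
  have "sym {(a, b). simF a b}" by (auto simp: sym_def intro: simF_sym)
  then have "sym ({(a, b). simF a b}\<^sup>*)" by (rule sym_rtrancl)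
  then show "symp simF_star" by (auto simp: symp_def simF_star_def sym_def)
qed

quotient_type S = real / simF_star
  by (rule equivp_simF_star)

definition T3 :: "(real \<Rightarrow> real) set" where
  "T3 = {t. (\<forall>k x. ((deriv ^^ k) t) differentiable (at x)) \<and> strict_mono t \<and> bij t}"

definition is_predictor :: "(('a::linorder \<Rightarrow> 'b) \<Rightarrow> ('a \<Rightarrow> 'b)) \<Rightarrow> bool" where
  "is_predictor P \<longleftrightarrow> (\<forall>f g x. (\<forall>y<x. f y = g y) \<longrightarrow> P f x = P g x)"

definition T3_anonymous :: "((real \<Rightarrow> 'b) \<Rightarrow> (real \<Rightarrow> 'b)) \<Rightarrow> bool" where
  "T3_anonymous P \<longleftrightarrow> (\<forall>f. \<forall>t\<in>T3. P (f \<circ> t) = P f \<circ> t)"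

end

(* Given w and z, we build a smooth increasing bijection t of the reals with t w = z such that
   x ~_F t x for every x < w.  Left of w, t is glued from infinitely many steps s_AB with rational
   corners (p_i, q_i), where p_i increases to w and q_i to z; right of w it continues by unit steps.
   The steps near w become ever steeper, but their rises shrink so fast that every derivative
   series still converges uniformly, so t is C^infinity.  Since f o t and f agree below w for
   f x = [x], any T_3-anonymous predictor satisfies P f z = P f (t w) = P (f o t) w = P f w. *)

theory Submission
  imports Defs "HOL-Computational_Algebra.Polynomial"
begin

section \<open>Smooth real functions\<close>

coinductive smooth :: "(real \<Rightarrow> real) \<Rightarrow> bool" where
  smoothI: "(\<And>x. (f has_real_derivative f' x) (at x)) \<Longrightarrow> smooth f' \<Longrightarrow> smooth f"

lemma smooth_DERIV: "smooth f \<Longrightarrow> (f has_real_derivative deriv f x) (at x)"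
  by (metis smooth.cases DERIV_imp_deriv)

lemma smooth_deriv:
  assumes "smooth f" shows "smooth (deriv f)"
proof -
  obtain f' where f': "\<And>x. (f has_real_derivative f' x) (at x)" "smooth f'"
    using assms by cases auto
  then have "deriv f = f'" by (auto intro!: ext DERIV_imp_deriv)
  with f' show ?thesis by simp
qed

lemma smooth_higher_deriv: "smooth f \<Longrightarrow> smooth ((deriv ^^ k) f)"
  by (induction k) (auto intro: smooth_deriv)

lemma smooth_higher_DERIV:
  "smooth f \<Longrightarrow> ((deriv ^^ k) f has_real_derivative (deriv ^^ Suc k) f x) (at x)"
  by (simp add: smooth_DERIV smooth_higher_deriv)

lemma smooth_deriv_sequence:
  assumes D: "\<And>k x. (D k has_real_derivative D (Suc k) x) (at x)"
  shows "smooth (D k)" and "(deriv ^^ k) (D 0) = D k"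
proof -
  have "smooth g" if "g = D k" for g k
    using that by (coinduction arbitrary: g k) (use D in blast)
  then show "smooth (D k)" by blast
  show "(deriv ^^ k) (D 0) = D k"
    by (induction k) (auto intro!: ext DERIV_imp_deriv D)
qed

lemma smooth_const: "smooth (\<lambda>x. c)"
  using smooth_deriv_sequence(1)[of "\<lambda>k x. if k = 0 then c else 0" 0]
  by (simp add: DERIV_const)

lemma smooth_add:
  assumes "smooth f" "smooth g" shows "smooth (\<lambda>x. f x + g x)"
proof -
  have "((\<lambda>x. (deriv ^^ k) f x + (deriv ^^ k) g x) has_real_derivative
      (deriv ^^ Suc k) f x + (deriv ^^ Suc k) g x) (at x)" for k x
    using assms by (intro DERIV_add smooth_higher_DERIV)
  from smooth_deriv_sequence(1)[of "\<lambda>k x. (deriv ^^ k) f x + (deriv ^^ k) g x" 0, OF this]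
  show ?thesis by simp
qed

lemma
  assumes "smooth f"
  shows smooth_affine: "smooth (\<lambda>x. c * f (a * x + b) + e)"
    and higher_deriv_affine: "(deriv ^^ k) (\<lambda>x. c * f (a * x + b) + e) =
      (\<lambda>x. c * a ^ k * (deriv ^^ k) f (a * x + b) + (if k = 0 then e else 0))"
proof -
  define D where "D k x = c * a ^ k * (deriv ^^ k) f (a * x + b) + (if k = 0 then e else 0)" for k x
  have "(D k has_real_derivative D (Suc k) x) (at x)" for k x
  proof -
    have "((\<lambda>x. (deriv ^^ k) f (a * x + b)) has_real_derivative (deriv ^^ Suc k) f (a * x + b) * a) (at x)"
      by (rule DERIV_chain2[OF smooth_higher_DERIV[OF assms]]) (auto intro!: derivative_eq_intros)
    then show ?thesis
      unfolding D_def by (auto intro!: derivative_eq_intros simp: algebra_simps)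
  qed
  then have "smooth (D 0)" "(deriv ^^ k) (D 0) = D k"
    by (rule smooth_deriv_sequence[of D])+
  moreover have "D 0 = (\<lambda>x. c * f (a * x + b) + e)" by (simp add: D_def fun_eq_iff)
  ultimately show "smooth (\<lambda>x. c * f (a * x + b) + e)"
    and "(deriv ^^ k) (\<lambda>x. c * f (a * x + b) + e) = D k" by simp_all
qed

definition sum_of_products :: "((real \<Rightarrow> real) \<times> (real \<Rightarrow> real)) list \<Rightarrow> real \<Rightarrow> real" where
  "sum_of_products L x = (\<Sum>(f, g)\<leftarrow>L. f x * g x)"

definition leibniz_expansion ::
    "((real \<Rightarrow> real) \<times> (real \<Rightarrow> real)) list \<Rightarrow> ((real \<Rightarrow> real) \<times> (real \<Rightarrow> real)) list" where
  "leibniz_expansion L = concat (map (\<lambda>(f, g). [(deriv f, g), (f, deriv g)]) L)"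

lemma leibniz_expansion_smooth:
  "\<forall>(f, g)\<in>set L. smooth f \<and> smooth g \<Longrightarrow> \<forall>(f, g)\<in>set (leibniz_expansion L). smooth f \<and> smooth g"
  by (induction L) (auto simp: leibniz_expansion_def smooth_deriv)

lemma sum_of_products_DERIV:
  "\<forall>(f, g)\<in>set L. smooth f \<and> smooth g \<Longrightarrow>
    (sum_of_products L has_real_derivative sum_of_products (leibniz_expansion L) x) (at x)"
proof (induction L)
  case Nil
  then show ?case by (simp add: sum_of_products_def leibniz_expansion_def)
next
  case (Cons fg L)
  obtain f g where fg: "fg = (f, g)" by fastforce
  with Cons have "smooth f" "smooth g" by auto
  have "((\<lambda>x. f x * g x + sum_of_products L x) has_real_derivative
      deriv f x * g x + f x * deriv g x + sum_of_products (leibniz_expansion L) x) (at x)"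
    using Cons \<open>smooth f\<close> \<open>smooth g\<close>
    by (auto intro!: derivative_eq_intros smooth_DERIV simp: mult.commute)
  then show ?case
    by (simp add: fg sum_of_products_def leibniz_expansion_def add.assoc)
qed

lemma smooth_sum_of_products:
  "\<forall>(f, g)\<in>set L. smooth f \<and> smooth g \<Longrightarrow> smooth (sum_of_products L)"
proof -
  \<comment> \<open>By the Leibniz rule, sums of products of smooth functions are closed under differentiation.\<close>
  have "smooth h" if "\<forall>(f, g)\<in>set L. smooth f \<and> smooth g" "h = sum_of_products L" for h L
    using that
  proof (coinduction arbitrary: h L)
    case smooth
    then show ?case
      using sum_of_products_DERIV leibniz_expansion_smooth by blast
  qed
  then show "\<forall>(f, g)\<in>set L. smooth f \<and> smooth g \<Longrightarrow> smooth (sum_of_products L)" by blast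
qed

lemma smooth_mult: "smooth f \<Longrightarrow> smooth g \<Longrightarrow> smooth (\<lambda>x. f x * g x)"
proof -
  have "sum_of_products [(f, g)] = (\<lambda>x. f x * g x)" by (simp add: sum_of_products_def fun_eq_iff)
  then show "smooth f \<Longrightarrow> smooth g \<Longrightarrow> smooth (\<lambda>x. f x * g x)"
    using smooth_sum_of_products[of "[(f, g)]"] by simp
qed

lemma smooth_divide:
  assumes g: "smooth g" "\<And>x. g x \<noteq> 0" and f: "smooth f"
  shows "smooth (\<lambda>x. f x / g x)"
proof -
  \<comment> \<open>The derivative of a quotient f / g^n is again of the form f' / g^(n+1).\<close>
  have "smooth h" if "smooth f" "h = (\<lambda>x. f x / g x ^ n)" for f h n
    using that
  proof (coinduction arbitrary: f h n)
    case smooth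
    define f' where "f' x = deriv f x * g x - real n * (f x * deriv g x)" for x
    have "smooth f'"
      unfolding f'_def[abs_def]
      using smooth_add[OF smooth_mult[OF smooth_deriv[OF smooth(1)] g(1)]
          smooth_affine[OF smooth_mult[OF smooth(1) smooth_deriv[OF g(1)]], of "- real n" 1 0 0]]
      by simp
    moreover have "(h has_real_derivative f' x / g x ^ Suc n) (at x)" for x
    proof -
      have "((\<lambda>x. f x / g x ^ n) has_real_derivative
          (deriv f x * g x ^ n - f x * (real n * (deriv g x * g x ^ (n - 1)))) / (g x ^ n * g x ^ n))
          (at x)"
        using smooth g by (auto intro!: derivative_eq_intros smooth_DERIV)
      moreover have "(deriv f x * g x ^ n - f x * (real n * (deriv g x * g x ^ (n - 1)))) /
          (g x ^ n * g x ^ n) = f' x / g x ^ Suc n"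
        using g(2)[of x] by (cases n) (simp_all add: f'_def field_simps power2_eq_square)
      ultimately show ?thesis using smooth(2) by simp
    qed
    ultimately show ?case
      by (intro exI[of _ h] exI[of _ "\<lambda>x. f' x / g x ^ Suc n"]) blast
  qed
  from this[of f _ 1] f show ?thesis by simp
qed

lemma smooth_suminf:
  fixes \<phi> :: "nat \<Rightarrow> real \<Rightarrow> real"
  assumes smooth: "\<And>n. smooth (\<phi> n)"
    and bound: "\<And>k c. \<exists>\<epsilon>>0. \<exists>M. summable M \<and>
      (\<forall>\<^sub>F n in sequentially. \<forall>x\<in>ball c \<epsilon>. \<bar>(deriv ^^ k) (\<phi> n) x\<bar> \<le> M n)"
  shows "smooth (\<lambda>x. \<Sum>n. \<phi> n x)" and "summable (\<lambda>n. \<phi> n x)"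
proof -
  have summable: "summable (\<lambda>n. (deriv ^^ k) (\<phi> n) x)" for k x
  proof -
    obtain \<epsilon> M where "\<epsilon> > 0" "summable M"
      and "\<forall>\<^sub>F n in sequentially. \<forall>y\<in>ball x \<epsilon>. \<bar>(deriv ^^ k) (\<phi> n) y\<bar> \<le> M n"
      using bound by blast
    then have "\<forall>\<^sub>F n in sequentially. norm ((deriv ^^ k) (\<phi> n) x) \<le> M n"
      by (auto elim!: eventually_mono)
    then show ?thesis using \<open>summable M\<close> by (rule summable_comparison_test_ev)
  qed
  from summable[of 0] show "summable (\<lambda>n. \<phi> n x)" by simp
  define D where "D k = (\<lambda>x. \<Sum>n. (deriv ^^ k) (\<phi> n) x)" for k
  have "(D k has_real_derivative D (Suc k) x) (at x)" for k x
  proof -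
    obtain \<epsilon> M where \<epsilon>: "\<epsilon> > 0" "summable M"
      "\<forall>\<^sub>F n in sequentially. \<forall>y\<in>ball x \<epsilon>. \<bar>(deriv ^^ Suc k) (\<phi> n) y\<bar> \<le> M n"
      using bound by blast
    have uniform: "uniformly_convergent_on (ball x \<epsilon>) (\<lambda>N y. \<Sum>n<N. (deriv ^^ Suc k) (\<phi> n) y)"
      by (rule Weierstrass_m_test'_ev) (use \<epsilon> in auto)
    have "((\<lambda>y. \<Sum>n. (deriv ^^ k) (\<phi> n) y) has_field_derivative (\<Sum>n. (deriv ^^ Suc k) (\<phi> n) x))
        (at x)"
      by (rule has_field_derivative_series'(2)[OF convex_ball _ uniform, where ?x0.0=x and x=x])
         (auto intro: has_field_derivative_at_within smooth_DERIV smooth_higher_deriv smooth summable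
           simp: \<epsilon>(1))
    then show ?thesis by (simp add: D_def)
  qed
  from smooth_deriv_sequence(1)[of D 0, OF this] show "smooth (\<lambda>x. \<Sum>n. \<phi> n x)"
    by (simp add: D_def)
qed

lemma higher_deriv_locally_const:
  assumes "smooth f" "open U" "\<And>y. y \<in> U \<Longrightarrow> f y = c" "y \<in> U"
  shows "(deriv ^^ k) f y = (if k = 0 then c else 0)"
  using assms(4)
proof (induction k arbitrary: y)
  case 0
  then show ?case using assms(3) by simp
next
  case (Suc k)
  have "((\<lambda>x. if k = 0 then c else 0) has_real_derivative (deriv ^^ Suc k) f y) (at y)"
    by (rule has_field_derivative_transform_within_open[OF smooth_higher_DERIV[OF assms(1)] assms(2)])
       (use Suc in auto)
  from DERIV_unique[OF this DERIV_const] show ?case by simp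
qed

lemma smooth_suminf_locally_finite:
  fixes \<phi> :: "nat \<Rightarrow> real \<Rightarrow> real"
  assumes smooth: "\<And>n. smooth (\<phi> n)"
    and vanish: "\<And>c. \<forall>\<^sub>F n in sequentially. \<forall>x\<in>ball c 1. \<phi> n x = 0"
  shows "smooth (\<lambda>x. \<Sum>n. \<phi> n x)" and "summable (\<lambda>n. \<phi> n x)"
proof -
  have "\<forall>\<^sub>F n in sequentially. \<forall>x\<in>ball c 1. \<bar>(deriv ^^ k) (\<phi> n) x\<bar> \<le> 0" for k c
    using vanish[of c]
  proof eventually_elim
    case (elim n)
    show ?case
    proof
      fix x assume "x \<in> ball c 1"
      with elim have "(deriv ^^ k) (\<phi> n) x = (if k = 0 then 0 else 0)"
        by (intro higher_deriv_locally_const[OF smooth open_ball]) auto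
      then show "\<bar>(deriv ^^ k) (\<phi> n) x\<bar> \<le> 0" by simp
    qed
  qed
  then have "\<exists>\<epsilon>>0. \<exists>M. summable M \<and>
      (\<forall>\<^sub>F n in sequentially. \<forall>x\<in>ball c \<epsilon>. \<bar>(deriv ^^ k) (\<phi> n) x\<bar> \<le> M n)" for k c
    by (intro exI[of _ 1] exI[of _ "\<lambda>_. 0"]) auto
  from smooth_suminf[OF smooth this] show "smooth (\<lambda>x. \<Sum>n. \<phi> n x)" "summable (\<lambda>n. \<phi> n x)"
    by blast+
qed

lemma smooth_strict_mono_surj_in_T3:
  assumes "smooth t" "strict_mono t" "surj t"
  shows "t \<in> T3"
proof -
  have "(deriv ^^ k) t differentiable (at x)" for k x
    using smooth_higher_DERIV[OF assms(1)] by (auto simp: real_differentiable_def)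
  moreover have "bij t" using assms(2,3) strict_mono_imp_inj_on by (auto simp: bij_def)
  ultimately show ?thesis using assms(2) by (simp add: T3_def)
qed

section \<open>The smooth step function\<close>

fun hfun_deriv_poly :: "nat \<Rightarrow> real poly" where
  "hfun_deriv_poly 0 = 1"
| "hfun_deriv_poly (Suc k) = (hfun_deriv_poly k - pderiv (hfun_deriv_poly k)) * [:0, 0, 1:]"

definition hfun_derivs :: "nat \<Rightarrow> real \<Rightarrow> real" where
  "hfun_derivs k x = (if x \<le> 0 then 0 else poly (hfun_deriv_poly k) (1 / x) * exp (- (1 / x)))"

lemma poly_times_exp_neg_tendsto_0: "((\<lambda>u. poly (p :: real poly) u * exp (- u)) \<longlongrightarrow> 0) at_top"
proof -
  have "poly p u * exp (- u) = (\<Sum>i\<le>degree p. coeff p i * (u ^ i / exp u))" for u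
    by (simp add: poly_altdef exp_minus sum_distrib_right divide_inverse mult.assoc)
  moreover have "((\<lambda>u. \<Sum>i\<le>degree p. coeff p i * (u ^ i / exp u)) \<longlongrightarrow> (\<Sum>i\<le>degree p. coeff p i * 0))
      at_top"
    by (intro tendsto_sum tendsto_mult tendsto_const tendsto_power_div_exp_0)
  ultimately show ?thesis by simp
qed

lemma hfun_derivs_DERIV_0: "(hfun_derivs k has_real_derivative 0) (at 0)"
proof -
  have "((\<lambda>y. poly ([:0, 1:] * hfun_deriv_poly k) (inverse y) * exp (- inverse y)) \<longlongrightarrow> 0)
      (at_right 0)"
    by (rule filterlim_compose[OF poly_times_exp_neg_tendsto_0 filterlim_inverse_at_top_right])
  moreover have "\<forall>\<^sub>F y in at_right 0. poly ([:0, 1:] * hfun_deriv_poly k) (inverse y) * exp (- inverse y)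
      = (hfun_derivs k y - hfun_derivs k 0) / (y - 0)"
    using eventually_at_right_less[of "0::real"]
    by eventually_elim (simp add: hfun_derivs_def poly_mult divide_inverse)
  ultimately have "((\<lambda>y. (hfun_derivs k y - hfun_derivs k 0) / (y - 0)) \<longlongrightarrow> 0) (at_right 0)"
    by (rule Lim_transform_eventually)
  moreover have "((\<lambda>y. (hfun_derivs k y - hfun_derivs k 0) / (y - 0)) \<longlongrightarrow> 0) (at_left 0)"
  proof (rule Lim_transform_eventually[OF tendsto_const])
    show "\<forall>\<^sub>F y in at_left 0. 0 = (hfun_derivs k y - hfun_derivs k 0) / (y - 0)"
      by (simp add: eventually_at_filter hfun_derivs_def)
  qed
  ultimately show ?thesis
    unfolding has_field_derivative_iff using filterlim_at_split by blast
qed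

lemma DERIV_poly_inverse_exp:
  assumes "x \<noteq> 0"
  shows "((\<lambda>y. poly p (1 / y) * exp (- (1 / y))) has_real_derivative
     poly ((p - pderiv p) * [:0, 0, 1:]) (1 / x) * exp (- (1 / x))) (at x)"
proof -
  have "((\<lambda>y. poly p (1 / y) * exp (- (1 / y))) has_real_derivative
      poly (pderiv p) (1 / x) * (- ((1 / x) ^ 2)) * exp (- (1 / x)) +
      poly p (1 / x) * (exp (- (1 / x)) * (1 / x) ^ 2)) (at x)"
    using assms
    by (auto intro!: derivative_eq_intros DERIV_chain2[OF poly_DERIV]
        simp: power2_eq_square divide_inverse)
  then show ?thesis by (simp add: algebra_simps power2_eq_square)
qed

lemma hfun_derivs_DERIV: "(hfun_derivs k has_real_derivative hfun_derivs (Suc k) x) (at x)"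
proof -
  consider "x < 0" | "x = 0" | "x > 0" by linarith
  then show ?thesis
  proof cases
    case 1
    have "((\<lambda>y. 0) has_real_derivative 0) (at x)" by (rule DERIV_const)
    then have "(hfun_derivs k has_real_derivative 0) (at x)"
      by (rule has_field_derivative_transform_within_open[of _ _ _ "{..<0}"])
         (use 1 in \<open>auto simp: hfun_derivs_def\<close>)
    then show ?thesis using 1 by (simp add: hfun_derivs_def)
  next
    case 2
    then show ?thesis using hfun_derivs_DERIV_0[of k] by (simp add: hfun_derivs_def)
  next
    case 3
    have "((\<lambda>y. poly (hfun_deriv_poly k) (1 / y) * exp (- (1 / y))) has_real_derivative
        poly (hfun_deriv_poly (Suc k)) (1 / x) * exp (- (1 / x))) (at x)"
      using DERIV_poly_inverse_exp[of x "hfun_deriv_poly k"] 3 by simp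
    then have "(hfun_derivs k has_real_derivative
        poly (hfun_deriv_poly (Suc k)) (1 / x) * exp (- (1 / x))) (at x)"
      by (rule has_field_derivative_transform_within_open[of _ _ _ "{0<..}"])
         (use 3 in \<open>auto simp: hfun_derivs_def\<close>)
    then show ?thesis using 3 by (simp add: hfun_derivs_def)
  qed
qed

lemma smooth_hfun: "smooth hfun"
proof -
  have "hfun_derivs 0 = hfun" by (auto simp: hfun_derivs_def hfun_def fun_eq_iff)
  then show ?thesis using smooth_deriv_sequence(1)[of hfun_derivs 0, OF hfun_derivs_DERIV] by simp
qed

lemma hfun_eq_0: "x \<le> 0 \<Longrightarrow> hfun x = 0"
  by (simp add: hfun_def)

lemma hfun_pos: "x > 0 \<Longrightarrow> hfun x > 0"
  by (simp add: hfun_def)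

lemma hfun_nonneg: "hfun x \<ge> 0"
  by (simp add: hfun_def)

lemma hfun_mono: "x \<le> y \<Longrightarrow> hfun x \<le> hfun y"
  by (auto simp: hfun_def divide_simps)

lemma hfun_less: "0 < y \<Longrightarrow> x < y \<Longrightarrow> hfun x < hfun y"
  by (auto simp: hfun_def divide_simps)

lemma hfun_sum_pos: "hfun x + hfun (1 - x) > 0"
  using hfun_pos[of x] hfun_pos[of "1 - x"] hfun_nonneg[of x] hfun_nonneg[of "1 - x"]
  by (cases "x > 0") auto

lemma smooth_sfun: "smooth sfun"
proof -
  have "smooth (\<lambda>x. hfun x + (1 * hfun ((- 1) * x + 1) + 0))"
    by (intro smooth_add smooth_affine smooth_hfun)
  then have "smooth (\<lambda>x. hfun x / (hfun x + hfun (1 - x)))"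
    by (intro smooth_divide smooth_hfun) (auto simp: less_imp_neq[OF hfun_sum_pos, symmetric])
  then show ?thesis by (simp add: sfun_def[abs_def])
qed

lemma sfun_eq_0: "x \<le> 0 \<Longrightarrow> sfun x = 0"
  by (simp add: sfun_def hfun_eq_0)

lemma sfun_eq_1: "x \<ge> 1 \<Longrightarrow> sfun x = 1"
  using hfun_sum_pos[of x] by (simp add: sfun_def hfun_eq_0)

lemma sfun_less:
  assumes "u < v" "u < 1" "0 < v"
  shows "sfun u < sfun v"
proof -
  have "hfun u * hfun (1 - v) < hfun v * hfun (1 - u)"
  proof (cases "u > 0")
    case True
    have "hfun u * hfun (1 - v) \<le> hfun u * hfun (1 - u)"
      using assms by (intro mult_left_mono hfun_mono hfun_nonneg) simp
    also have "\<dots> < hfun v * hfun (1 - u)"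
      using assms by (intro mult_strict_right_mono hfun_less hfun_pos) simp_all
    finally show ?thesis .
  next
    case False
    then show ?thesis using assms by (simp add: hfun_eq_0 hfun_pos)
  qed
  then show ?thesis
    using hfun_sum_pos[of u] hfun_sum_pos[of v] by (simp add: sfun_def field_simps)
qed

lemma sfun_mono: "u \<le> v \<Longrightarrow> sfun u \<le> sfun v"
  using sfun_less[of u v] by (cases "u = v \<or> u \<ge> 1 \<or> v \<le> 0") (auto simp: sfun_eq_0 sfun_eq_1)

lemma higher_deriv_sfun_bounded: "\<exists>B. \<forall>x. \<bar>(deriv ^^ k) sfun x\<bar> \<le> B"
proof -
  have "continuous_on {0..1} ((deriv ^^ k) sfun)"
    by (intro continuous_at_imp_continuous_on ballI DERIV_isCont[OF smooth_higher_DERIV] smooth_sfun)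
  then have "bounded ((deriv ^^ k) sfun ` {0..1})"
    by (intro compact_imp_bounded compact_continuous_image) auto
  then obtain B where B: "\<And>x. x \<in> {0..1} \<Longrightarrow> \<bar>(deriv ^^ k) sfun x\<bar> \<le> B"
    unfolding bounded_real by blast
  have outside: "(deriv ^^ k) sfun x \<in> {0, 1}" if x: "x \<notin> {0..1}" for x
  proof -
    consider "x < 0" | "x > 1" using x by force
    then show ?thesis
    proof cases
      case 1
      then show ?thesis
        using higher_deriv_locally_const[OF smooth_sfun, of "{..<0}" 0 x k] by (simp add: sfun_eq_0)
    next
      case 2
      then show ?thesis
        using higher_deriv_locally_const[OF smooth_sfun, of "{1<..}" 1 x k] by (simp add: sfun_eq_1)
    qed
  qed
  have "\<bar>(deriv ^^ k) sfun x\<bar> \<le> max B 1" for x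
  proof (cases "x \<in> {0..1}")
    case True
    then show ?thesis using B[of x] by simp
  next
    case False
    then show ?thesis using outside[of x] by auto
  qed
  then show ?thesis by blast
qed

lemma sAB_affine: "sAB p1 q1 p2 q2 = (\<lambda>x. (q2 - q1) * sfun (1 / (p2 - p1) * x + - p1 / (p2 - p1)) + q1)"
  by (simp add: sAB_def fun_eq_iff diff_divide_distrib)

lemma smooth_sAB: "smooth (sAB p1 q1 p2 q2)"
  unfolding sAB_affine by (rule smooth_affine[OF smooth_sfun])

lemma higher_deriv_sAB_bounded:
  obtains C where "\<And>p1 p2 q2 x. p1 < p2 \<Longrightarrow>
    \<bar>(deriv ^^ k) (sAB p1 0 p2 q2) x\<bar> \<le> C * \<bar>q2\<bar> / (p2 - p1) ^ k"
proof -
  obtain C where C: "\<And>x. \<bar>(deriv ^^ k) sfun x\<bar> \<le> C"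
    using higher_deriv_sfun_bounded by blast
  have "\<bar>(deriv ^^ k) (sAB p1 0 p2 q2) x\<bar> \<le> C * \<bar>q2\<bar> / (p2 - p1) ^ k" if "p1 < p2" for p1 p2 q2 x
  proof -
    have "\<bar>(deriv ^^ k) (sAB p1 0 p2 q2) x\<bar>
        = \<bar>q2\<bar> / (p2 - p1) ^ k * \<bar>(deriv ^^ k) sfun (1 / (p2 - p1) * x + - p1 / (p2 - p1))\<bar>"
      unfolding sAB_affine higher_deriv_affine[OF smooth_sfun]
      using that by (simp add: abs_mult power_one_over)
    also have "\<dots> \<le> \<bar>q2\<bar> / (p2 - p1) ^ k * C"
      using that by (intro mult_left_mono C) simp
    finally show ?thesis by (simp add: mult.commute)
  qed
  then show ?thesis using that by blast
qed

context
  fixes p1 q1 p2 q2 :: real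
  assumes p12: "p1 < p2"
begin

lemma sAB_eq_left: "x \<le> p1 \<Longrightarrow> sAB p1 q1 p2 q2 x = q1"
  using p12 by (simp add: sAB_def sfun_eq_0 divide_nonpos_pos)

lemma sAB_eq_right: "p2 \<le> x \<Longrightarrow> sAB p1 q1 p2 q2 x = q2"
  using p12 by (simp add: sAB_def sfun_eq_1)

lemma sAB_mono: "q1 \<le> q2 \<Longrightarrow> x \<le> y \<Longrightarrow> sAB p1 q1 p2 q2 x \<le> sAB p1 q1 p2 q2 y"
  using p12 by (auto simp: sAB_def intro!: mult_left_mono sfun_mono divide_right_mono)

lemma sAB_less:
  "q1 < q2 \<Longrightarrow> x < y \<Longrightarrow> x < p2 \<Longrightarrow> p1 < y \<Longrightarrow> sAB p1 q1 p2 q2 x < sAB p1 q1 p2 q2 y"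
  using p12 by (auto simp: sAB_def intro!: sfun_less divide_strict_right_mono)

lemma simF_sAB:
  "p1 \<in> \<rat> \<Longrightarrow> q1 \<in> \<rat> \<Longrightarrow> p2 \<in> \<rat> \<Longrightarrow> q2 \<in> \<rat> \<Longrightarrow> q1 < q2 \<Longrightarrow> x \<in> {p1..p2} \<Longrightarrow>
    simF x (sAB p1 q1 p2 q2 x)"
  using p12 unfolding simF_def by blast

end

section \<open>A smooth staircase through rational steps\<close>

lemma suminf_less_suminf:
  fixes f g :: "nat \<Rightarrow> real"
  assumes "summable f" "summable g" "\<And>n. f n \<le> g n" "f i < g i"
  shows "suminf f < suminf g"
proof -
  have "0 < (\<Sum>n. g n - f n)"
    using assms by (intro suminf_pos2[of _ i] summable_diff) auto
  also have "(\<Sum>n. g n - f n) = suminf g - suminf f"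
    using assms by (intro suminf_diff[symmetric])
  finally show ?thesis by simp
qed

lemma interval_index:
  fixes p :: "nat \<Rightarrow> 'a :: linorder"
  assumes "p 0 \<le> x" "x < p N"
  shows "\<exists>i. p i \<le> x \<and> x < p (Suc i)"
  using assms(2)
proof (induction N)
  case 0
  then show ?case using assms(1) by simp
next
  case (Suc N)
  then show ?case by (cases "x < p N") (auto simp: not_less)
qed

locale staircase =
  fixes w z :: real and p q :: "nat \<Rightarrow> real"
  assumes p_rat: "p i \<in> \<rat>" and q_rat: "q i \<in> \<rat>"
    and p_less: "p i < p (Suc i)" and q_less: "q i < q (Suc i)"
    and p_tendsto: "p \<longlonglongrightarrow> w" and q_tendsto: "q \<longlonglongrightarrow> z"
    and rise_over_run: "k \<le> i \<Longrightarrow> (q (Suc i) - q i) / (p (Suc i) - p i) ^ k \<le> (1 / 2) ^ i"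
    \<comment> \<open>bounds the k-th derivative of the i-th step, making the derivative series summable\<close>
begin

text \<open>A left step is -1 left of its interval and 0 right of it, so only finitely many
  left steps are non-zero near any point.\<close>
definition left_step :: "nat \<Rightarrow> real \<Rightarrow> real" where
  "left_step n = sAB (p 0 - real n - 1) (- 1) (p 0 - real n) 0"

definition mid_step :: "nat \<Rightarrow> real \<Rightarrow> real" where
  "mid_step i = sAB (p i) 0 (p (Suc i)) (q (Suc i) - q i)"

definition right_step :: "nat \<Rightarrow> real \<Rightarrow> real" where
  "right_step n = sAB (w + real n) 0 (w + real n + 1) 1"

definition stair :: "real \<Rightarrow> real" where
  "stair x = q 0 + (\<Sum>n. left_step n x) + (\<Sum>n. mid_step n x) + (\<Sum>n. right_step n x)"

lemma p_mono: "i \<le> j \<Longrightarrow> p i \<le> p j"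
  using lift_Suc_mono_le[of p] p_less less_imp_le by metis

lemma p_less_w: "p i < w"
proof -
  have "incseq p" using p_mono by (simp add: incseq_def)
  from incseq_le[OF this p_tendsto] p_less[of i] show ?thesis by (meson less_le_trans)
qed

lemma mid_interval:
  assumes "p 0 \<le> x" "x < w"
  obtains i where "p i \<le> x" "x < p (Suc i)"
proof -
  obtain N where "x < p N"
    using order_tendstoD(1)[OF p_tendsto assms(2)] by (auto simp: eventually_sequentially)
  then show ?thesis using interval_index[of p x N] assms(1) that by blast
qed

lemma left_interval:
  assumes "x < p 0"
  obtains m :: nat where "p 0 - real m - 1 \<le> x" "x < p 0 - real m"
proof -
  have "p 0 - real (nat \<lceil>p 0 - x\<rceil> - 1) - 1 \<le> x" "x < p 0 - real (nat \<lceil>p 0 - x\<rceil> - 1)"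
    using assms by simp_all linarith+
  then show ?thesis using that by blast
qed

lemma right_interval:
  assumes "w \<le> x"
  obtains m :: nat where "w + real m \<le> x" "x < w + real m + 1"
proof -
  have "w + real (nat \<lfloor>x - w\<rfloor>) \<le> x" "x < w + real (nat \<lfloor>x - w\<rfloor>) + 1"
    using assms by simp_all linarith+
  then show ?thesis using that by blast
qed

lemma smooth_left_steps: "smooth (\<lambda>x. \<Sum>n. left_step n x)" "summable (\<lambda>n. left_step n x)"
proof -
  have "\<forall>\<^sub>F n in sequentially. \<forall>x\<in>ball c 1. left_step n x = 0" for c
  proof (rule eventually_sequentiallyI[of "nat \<lceil>p 0 - c + 1\<rceil>"], intro ballI)
    fix n x assume "nat \<lceil>p 0 - c + 1\<rceil> \<le> n" "x \<in> ball c 1"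
    then have "p 0 - real n \<le> x" by (auto simp: dist_real_def) linarith
    then show "left_step n x = 0" by (simp add: left_step_def sAB_eq_right)
  qed
  from smooth_suminf_locally_finite[OF _ this] smooth_sAB
  show "smooth (\<lambda>x. \<Sum>n. left_step n x)" "summable (\<lambda>n. left_step n x)"
    by (auto simp: left_step_def)
qed

lemma smooth_right_steps: "smooth (\<lambda>x. \<Sum>n. right_step n x)" "summable (\<lambda>n. right_step n x)"
proof -
  have "\<forall>\<^sub>F n in sequentially. \<forall>x\<in>ball c 1. right_step n x = 0" for c
  proof (rule eventually_sequentiallyI[of "nat \<lceil>c + 1 - w\<rceil>"], intro ballI)
    fix n x assume "nat \<lceil>c + 1 - w\<rceil> \<le> n" "x \<in> ball c 1"
    then have "x \<le> w + real n" by (auto simp: dist_real_def)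
    then show "right_step n x = 0" by (simp add: right_step_def sAB_eq_left)
  qed
  from smooth_suminf_locally_finite[OF _ this] smooth_sAB
  show "smooth (\<lambda>x. \<Sum>n. right_step n x)" "summable (\<lambda>n. right_step n x)"
    by (auto simp: right_step_def)
qed

lemma smooth_mid_steps: "smooth (\<lambda>x. \<Sum>n. mid_step n x)" "summable (\<lambda>n. mid_step n x)"
proof -
  have "\<exists>\<epsilon>>0. \<exists>M. summable M \<and>
      (\<forall>\<^sub>F n in sequentially. \<forall>x\<in>ball c \<epsilon>. \<bar>(deriv ^^ k) (mid_step n) x\<bar> \<le> M n)" for k c
  proof -
    obtain C where C: "\<And>p1 p2 q2 x. p1 < p2 \<Longrightarrow>
        \<bar>(deriv ^^ k) (sAB p1 0 p2 q2) x\<bar> \<le> C * \<bar>q2\<bar> / (p2 - p1) ^ k"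
      using higher_deriv_sAB_bounded by blast
    have "\<bar>(deriv ^^ k) (mid_step n) x\<bar> \<le> \<bar>C\<bar> * (1 / 2) ^ n" if "k \<le> n" for n x
    proof -
      have "\<bar>(deriv ^^ k) (mid_step n) x\<bar> \<le> C * ((q (Suc n) - q n) / (p (Suc n) - p n) ^ k)"
        using C[OF p_less[of n], of "q (Suc n) - q n" x] q_less[of n] by (simp add: mid_step_def)
      also have "\<dots> \<le> \<bar>C\<bar> * ((q (Suc n) - q n) / (p (Suc n) - p n) ^ k)"
        using p_less[of n] q_less[of n] by (intro mult_right_mono) auto
      also have "\<dots> \<le> \<bar>C\<bar> * (1 / 2) ^ n"
        using rise_over_run[OF that] by (intro mult_left_mono) auto
      finally show ?thesis .
    qed
    then show ?thesis
      by (intro exI[of _ 1] exI[of _ "\<lambda>n. \<bar>C\<bar> * (1 / 2) ^ n"] conjI summable_mult summable_geometric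
          eventually_sequentiallyI[of k]) auto
  qed
  from smooth_suminf[OF _ this] smooth_sAB
  show "smooth (\<lambda>x. \<Sum>n. mid_step n x)" "summable (\<lambda>n. mid_step n x)"
    by (auto simp: mid_step_def)
qed

lemma left_steps_sum:
  assumes "p 0 - real m - 1 \<le> x" "x \<le> p 0 - real m"
  shows "(\<Sum>n. left_step n x) = left_step m x - real m"
proof -
  have "(\<Sum>n. left_step n x) = (\<Sum>n<Suc m. left_step n x)"
  proof (rule suminf_finite)
    fix n assume "n \<notin> {..<Suc m}"
    then have "p 0 - real n \<le> x" using assms by auto
    then show "left_step n x = 0" by (simp add: left_step_def sAB_eq_right)
  qed simp
  also have "\<dots> = (\<Sum>n<m. - 1) + left_step m x"
  proof -
    have "left_step n x = - 1" if "n < m" for n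
    proof -
      have "x \<le> p 0 - real n - 1" using that assms by auto
      then show ?thesis by (simp add: left_step_def sAB_eq_left)
    qed
    then show ?thesis by simp
  qed
  finally show ?thesis by simp
qed

lemma left_steps_sum_eq_0: "p 0 \<le> x \<Longrightarrow> (\<Sum>n. left_step n x) = 0"
  by (simp add: left_step_def sAB_eq_right)

lemma mid_steps_sum:
  assumes "p i \<le> x" "x \<le> p (Suc i)"
  shows "(\<Sum>n. mid_step n x) = q i - q 0 + mid_step i x"
proof -
  have "(\<Sum>n. mid_step n x) = (\<Sum>n<Suc i. mid_step n x)"
  proof (rule suminf_finite)
    fix n assume "n \<notin> {..<Suc i}"
    then have "x \<le> p n" using assms p_mono[of "Suc i" n] by auto
    then show "mid_step n x = 0" by (simp add: mid_step_def sAB_eq_left p_less)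
  qed simp
  also have "\<dots> = (\<Sum>n<i. q (Suc n) - q n) + mid_step i x"
  proof -
    have "mid_step n x = q (Suc n) - q n" if "n < i" for n
    proof -
      have "p (Suc n) \<le> x" using that assms p_mono[of "Suc n" i] by auto
      then show ?thesis by (simp add: mid_step_def sAB_eq_right p_less)
    qed
    then show ?thesis by simp
  qed
  finally show ?thesis by (simp add: sum_lessThan_telescope)
qed

lemma mid_steps_sum_eq_0: "x \<le> p 0 \<Longrightarrow> (\<Sum>n. mid_step n x) = 0"
  using p_mono[of 0] by (simp add: mid_step_def sAB_eq_left p_less order_trans)

lemma mid_steps_sum_right: "w \<le> x \<Longrightarrow> (\<Sum>n. mid_step n x) = z - q 0"
proof -
  assume "w \<le> x"
  then have "mid_step n x = q (Suc n) - q n" for n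
    using p_less_w[of "Suc n"] by (simp add: mid_step_def sAB_eq_right p_less)
  with telescope_sums[OF q_tendsto] show ?thesis by (simp add: sums_iff)
qed

lemma right_steps_sum_eq_0: "x \<le> w \<Longrightarrow> (\<Sum>n. right_step n x) = 0"
  by (simp add: right_step_def sAB_eq_left)

lemma right_steps_sum_at: "(\<Sum>n. right_step n (w + real m)) = real m"
proof -
  have "(\<Sum>n. right_step n (w + real m)) = (\<Sum>n<m. right_step n (w + real m))"
    by (rule suminf_finite) (auto simp: right_step_def sAB_eq_left)
  also have "\<dots> = (\<Sum>n<m. 1)"
    by (intro sum.cong) (auto simp: right_step_def sAB_eq_right)
  finally show ?thesis by simp
qed

lemma stair_left:
  assumes "p 0 - real m - 1 \<le> x" "x \<le> p 0 - real m"
  shows "stair x = sAB (p 0 - real m - 1) (q 0 - real m - 1) (p 0 - real m) (q 0 - real m) x"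
  using assms p_less_w[of 0]
  by (simp add: stair_def left_steps_sum mid_steps_sum_eq_0 right_steps_sum_eq_0)
     (simp add: left_step_def sAB_def)

lemma stair_mid:
  assumes "p i \<le> x" "x \<le> p (Suc i)"
  shows "stair x = sAB (p i) (q i) (p (Suc i)) (q (Suc i)) x"
proof -
  have "p 0 \<le> x" "x \<le> w" using assms p_mono[of 0 i] p_less_w[of "Suc i"] by auto
  with assms show ?thesis
    by (simp add: stair_def left_steps_sum_eq_0 mid_steps_sum right_steps_sum_eq_0)
       (simp add: mid_step_def sAB_def)
qed

lemma stair_right: "stair (w + real m) = z + real m"
  using p_less_w[of 0]
  by (simp add: stair_def left_steps_sum_eq_0 mid_steps_sum_right right_steps_sum_at)

lemma simF_stair:
  assumes "x < w"
  shows "simF x (stair x)"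
proof (cases "x < p 0")
  case True
  then obtain m where "p 0 - real m - 1 \<le> x" "x < p 0 - real m" by (rule left_interval)
  with p_rat[of 0] q_rat[of 0] show ?thesis
    by (simp add: stair_left simF_sAB)
next
  case False
  then obtain i where "p i \<le> x" "x < p (Suc i)"
    using mid_interval[of x] assms by (auto simp: not_less)
  with p_rat q_rat p_less q_less show ?thesis
    by (simp add: stair_mid simF_sAB)
qed

lemma smooth_stair: "smooth stair"
  unfolding stair_def[abs_def]
  by (intro smooth_add smooth_const smooth_left_steps smooth_mid_steps smooth_right_steps)

lemma stair_less:
  assumes "x < y"
  shows "stair x < stair y"
proof -
  have mono: "left_step n x \<le> left_step n y" "mid_step n x \<le> mid_step n y"
    "right_step n x \<le> right_step n y" for n
    using assms p_less q_less[of n]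
    by (auto simp: left_step_def mid_step_def right_step_def intro!: sAB_mono)
  then have le: "(\<Sum>n. left_step n x) \<le> (\<Sum>n. left_step n y)"
      "(\<Sum>n. mid_step n x) \<le> (\<Sum>n. mid_step n y)"
      "(\<Sum>n. right_step n x) \<le> (\<Sum>n. right_step n y)"
    by (intro suminf_le smooth_left_steps smooth_mid_steps smooth_right_steps; blast)+
  consider "x < p 0" | "p 0 \<le> x" "x < w" | "w \<le> x" by linarith
  then have "(\<Sum>n. left_step n x) < (\<Sum>n. left_step n y) \<or> (\<Sum>n. mid_step n x) < (\<Sum>n. mid_step n y)
      \<or> (\<Sum>n. right_step n x) < (\<Sum>n. right_step n y)"
  proof cases
    case 1
    then obtain m where "p 0 - real m - 1 \<le> x" "x < p 0 - real m" by (rule left_interval)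
    then have "left_step m x < left_step m y"
      using assms by (simp add: left_step_def sAB_less)
    then show ?thesis
      using suminf_less_suminf[OF smooth_left_steps(2) smooth_left_steps(2) mono(1)] by blast
  next
    case 2
    then obtain i where "p i \<le> x" "x < p (Suc i)" by (rule mid_interval)
    then have "mid_step i x < mid_step i y"
      using assms p_less[of i] q_less[of i] by (simp add: mid_step_def sAB_less)
    then show ?thesis
      using suminf_less_suminf[OF smooth_mid_steps(2) smooth_mid_steps(2) mono(2)] by blast
  next
    case 3
    then obtain m where "w + real m \<le> x" "x < w + real m + 1" by (rule right_interval)
    then have "right_step m x < right_step m y"
      using assms by (simp add: right_step_def sAB_less)
    then show ?thesis
      using suminf_less_suminf[OF smooth_right_steps(2) smooth_right_steps(2) mono(3)] by blast
  qed
  with le show ?thesis by (simp add: stair_def) linarith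
qed

lemma surj_stair: "surj stair"
proof -
  have "c \<in> range stair" for c
  proof -
    obtain m :: nat where m: "\<bar>c\<bar> + \<bar>q 0\<bar> + \<bar>z\<bar> \<le> real m" using real_arch_simple by blast
    have "stair (p 0 - real m) = q 0 - real m"
      using stair_left[of m "p 0 - real m"] by (simp add: sAB_eq_right)
    moreover have "stair (w + real m) = z + real m" by (rule stair_right)
    moreover have "\<forall>x. isCont stair x" using smooth_DERIV[OF smooth_stair] DERIV_isCont by blast
    moreover have "p 0 - real m \<le> w + real m" using p_less_w[of 0] by simp
    ultimately have "\<exists>x\<ge>p 0 - real m. x \<le> w + real m \<and> stair x = c"
      using m by (intro IVT) auto
    then show ?thesis by auto
  qed
  then show ?thesis by blast
qed

lemma stair_in_T3: "stair \<in> T3"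
  by (rule smooth_strict_mono_surj_in_T3[OF smooth_stair strict_monoI[OF stair_less] surj_stair])

end

lemma tendsto_from_below:
  fixes r e :: "nat \<Rightarrow> real"
  assumes "e \<longlonglongrightarrow> 0" "\<And>i. c - e i \<le> r i" "\<And>i. r i \<le> c"
  shows "r \<longlonglongrightarrow> c"
proof (rule tendsto_sandwich[of "\<lambda>i. c - e i" _ _ "\<lambda>i. c"])
  show "(\<lambda>i. c - e i) \<longlonglongrightarrow> c" using tendsto_diff[OF tendsto_const assms(1)] by simp
qed (use assms in auto)

lemma rational_seq_between:
  fixes a b :: "nat \<Rightarrow> real"
  assumes "\<And>i. a i < b i"
  obtains r where "\<And>i. r i \<in> \<rat>" "\<And>i. a i < r i" "\<And>i. r i < b i"
proof -
  have "\<forall>i. \<exists>r. r \<in> \<rat> \<and> a i < r \<and> r < b i"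
    using Rats_dense_in_real[OF assms] by blast
  then obtain r where "\<forall>i. r i \<in> \<rat> \<and> a i < r i \<and> r i < b i" by metis
  with that show ?thesis by blast
qed

text \<open>The factor (2^-(2i+1))^i absorbs the k-th power (k \<le> i) of the run 2^-(2i+1) of the
  i-th step chosen below.\<close>
definition rise_bound :: "nat \<Rightarrow> real" where
  "rise_bound i = ((1 / 2) ^ (2 * i + 1)) ^ i * (1 / 2) ^ i"

lemma rise_bound_eq: "rise_bound i = (1 / 2) ^ (2 * i * i + 2 * i)"
proof -
  have "2 * i * i + 2 * i = (2 * i + 1) * i + i" by (simp add: algebra_simps)
  then show ?thesis unfolding rise_bound_def by (simp only: power_add power_mult)
qed

lemma rise_bound_pos: "0 < rise_bound i"
  by (simp add: rise_bound_def)

lemma rise_bound_le: "rise_bound i \<le> (1 / 2) ^ i"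
  unfolding rise_bound_eq by (rule power_decreasing) auto

lemma rise_bound_Suc: "rise_bound (Suc i) \<le> rise_bound i / 2"
proof -
  have "rise_bound (Suc i) \<le> (1 / 2) ^ (2 * i * i + 2 * i + 1)"
    unfolding rise_bound_eq by (rule power_decreasing) auto
  then show ?thesis by (simp add: rise_bound_eq)
qed

lemma rise_over_run_le:
  fixes d D :: real
  assumes "0 < d" "d \<le> rise_bound i" "(1 / 2) ^ (2 * i + 1) \<le> D" "k \<le> i"
  shows "d / D ^ k \<le> (1 / 2) ^ i"
proof -
  define l :: real where "l = (1 / 2) ^ (2 * i + 1)"
  have l: "0 < l" "l \<le> 1" unfolding l_def by (simp, rule power_le_one) auto
  have "d / D ^ k \<le> l ^ i * (1 / 2) ^ i / l ^ k"
    using assms l by (intro frac_le power_mono) (auto simp: l_def rise_bound_def)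
  also have "\<dots> = l ^ (i - k) * (1 / 2) ^ i"
    using l assms(4) by (simp add: power_diff)
  also have "\<dots> \<le> (1 / 2) ^ i"
    using l by (intro mult_left_le_one_le power_le_one) auto
  finally show ?thesis .
qed

lemma staircase_exists: "\<exists>p q. staircase w z p q"
proof -
  obtain p where p: "\<And>i. p i \<in> \<rat>" "\<And>i. w - 2 * (1 / 4) ^ i < p i" "\<And>i. p i < w - (1 / 4) ^ i"
    by (rule rational_seq_between[of "\<lambda>i. w - 2 * (1 / 4) ^ i" "\<lambda>i. w - (1 / 4) ^ i"]) auto
  obtain q where q: "\<And>i. q i \<in> \<rat>" "\<And>i. z - rise_bound i < q i"
    "\<And>i. q i < z - rise_bound i / 2"
    by (rule rational_seq_between[of "\<lambda>i. z - rise_bound i" "\<lambda>i. z - rise_bound i / 2"]) (auto simp: rise_bound_pos)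
  have run: "(1 / 2) ^ (2 * i + 1) \<le> p (Suc i) - p i" for i
  proof -
    have "(1 / 2 :: real) ^ (2 * i + 1) = (1 / 4) ^ i - 2 * (1 / 4) ^ Suc i"
      by (simp add: power_add power_mult power2_eq_square)
    then show ?thesis using p(2)[of "Suc i"] p(3)[of i] by linarith
  qed
  have p_less: "p i < p (Suc i)" for i
    using run[of i] zero_less_power[of "1 / 2 :: real" "2 * i + 1"] by linarith
  have rise: "0 < q (Suc i) - q i" "q (Suc i) - q i \<le> rise_bound i" for i
    using q(2)[of "Suc i"] q(3)[of i] q(2)[of i] q(3)[of "Suc i"] rise_bound_Suc[of i] rise_bound_pos[of "Suc i"] by auto
  have "(\<lambda>i. 2 * (1 / 4 :: real) ^ i) \<longlonglongrightarrow> 0"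
    by (intro tendsto_mult_right_zero LIMSEQ_power_zero) simp
  moreover have "w - 2 * (1 / 4) ^ i \<le> p i" "p i \<le> w" for i
    using p(2,3)[of i] zero_less_power[of "1 / 4 :: real" i] by linarith+
  ultimately have p_tendsto: "p \<longlonglongrightarrow> w" by (rule tendsto_from_below)
  have "(\<lambda>i. (1 / 2 :: real) ^ i) \<longlonglongrightarrow> 0" by (intro LIMSEQ_power_zero) simp
  moreover have "z - (1 / 2) ^ i \<le> q i" for i using q(2)[of i] rise_bound_le[of i] by linarith
  moreover have "q i \<le> z" for i using q(3)[of i] rise_bound_pos[of i] by linarith
  ultimately have q_tendsto: "q \<longlonglongrightarrow> z" by (rule tendsto_from_below)
  have "(q (Suc i) - q i) / (p (Suc i) - p i) ^ k \<le> (1 / 2) ^ i" if "k \<le> i" for i k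
    using rise[of i] run[of i] that by (intro rise_over_run_le)
  with p(1) q(1) p_less rise(1) p_tendsto q_tendsto have "staircase w z p q"
    by unfold_locales auto
  then show ?thesis by blast
qed

lemma T3_map_related_below: "\<exists>t\<in>T3. t w = z \<and> (\<forall>x<w. simF x (t x))"
proof -
  obtain p q where "staircase w z p q" using staircase_exists by blast
  then interpret staircase w z p q .
  show ?thesis using stair_in_T3 stair_right[of 0] simF_stair by auto
qed

lemma T3_anonymous_predictor_transport:
  assumes "is_predictor P" "T3_anonymous P" "t \<in> T3" "\<And>x. x < w \<Longrightarrow> f (t x) = f x"
  shows "P f (t w) = P f w"
proof -
  have "P f (t w) = P (f \<circ> t) w"
    using assms(2,3) unfolding T3_anonymous_def by (metis comp_apply)
  also have "\<dots> = P f w"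
    using assms(1,4) unfolding is_predictor_def by auto
  finally show ?thesis .
qed

theorem mainTheorem9:
  fixes P :: "(real \<Rightarrow> S) \<Rightarrow> (real \<Rightarrow> S)"
  assumes "is_predictor P" and "T3_anonymous P"
  shows "\<forall>w z. P abs_S w = P abs_S z"
proof (intro allI)
  fix w z :: real
  obtain t where t: "t \<in> T3" "t w = z" "\<And>x. x < w \<Longrightarrow> simF x (t x)"
    using T3_map_related_below by blast
  have "abs_S (t x) = abs_S x" if "x < w" for x
    using t(3)[OF that] by (auto simp: S.abs_eq_iff simF_star_def intro: simF_sym)
  with assms t(1) have "P abs_S (t w) = P abs_S w"
    by (rule T3_anonymous_predictor_transport)
  with t(2) show "P abs_S w = P abs_S z" by simp
qed

end
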